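(* Let $K_1$ and $K_2$ be compact (Hausdorff) spaces neither of which contains an uncountable metrizable closed subspace. Then $\mathcal C_p(K_1\times K_2)$ does not contain a complemented copy of $\mathcal C_p(L)$ for any uncountable metric compact space $L$.
   Context: For a compact space $K$, $\mathcal C_p(K)$ denotes the vector space of continuous real-valued functions on $K$ with the topology of pointwise convergence. $\mathcal C_p(K)$ contains a complemented copy of a topological vector space $X$ if there are closed linear subspaces $E,F$ of $\mathcal C_p(K)$ with $\mathcal C_p(K)=E\oplus F$ algebraically, such that the canonical projections onto $E$ and $F$ are continuous and $E$ is linearly homeomorphic (isomorphic as a topological vector space) to $X$. *)

theory Defs
  imports "HOL-Analysis.Analysis"
begin

text \<open>C_p(K): continuous real functions on the topological space K (normalised to be 0
  outside the carrier of K, so that they are determined by their values on K), with the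
  topology of pointwise convergence, i.e. the subspace topology of the product topology
  on 'a => real (the library's euclidean topology on function spaces).\<close>

definition Cp_set :: "'a topology \<Rightarrow> ('a \<Rightarrow> real) set" where
  "Cp_set K = {f. continuous_map K euclideanreal f \<and> (\<forall>x. x \<notin> topspace K \<longrightarrow> f x = 0)}"

definition Cp_top :: "'a topology \<Rightarrow> ('a \<Rightarrow> real) topology" where
  "Cp_top K = subtopology euclidean (Cp_set K)"

definition lin_subspace :: "('a \<Rightarrow> real) set \<Rightarrow> bool" where
  "lin_subspace E \<longleftrightarrow> (\<lambda>x. 0) \<in> E \<and>
     (\<forall>f\<in>E. \<forall>g\<in>E. (\<lambda>x. f x + g x) \<in> E) \<and>
     (\<forall>c. \<forall>f\<in>E. (\<lambda>x. c * f x) \<in> E)"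

definition lin_map_on :: "('a \<Rightarrow> real) set \<Rightarrow> (('a \<Rightarrow> real) \<Rightarrow> ('b \<Rightarrow> real)) \<Rightarrow> bool" where
  "lin_map_on E T \<longleftrightarrow>
     (\<forall>f\<in>E. \<forall>g\<in>E. T (\<lambda>x. f x + g x) = (\<lambda>y. T f y + T g y)) \<and>
     (\<forall>c. \<forall>f\<in>E. T (\<lambda>x. c * f x) = (\<lambda>y. c * T f y))"

definition contains_complemented_Cp :: "'a topology \<Rightarrow> 'b topology \<Rightarrow> bool" where
  "contains_complemented_Cp K L \<longleftrightarrow>
    (\<exists>E F. E \<subseteq> Cp_set K \<and> F \<subseteq> Cp_set K \<and> lin_subspace E \<and> lin_subspace F \<and>
       closedin (Cp_top K) E \<and> closedin (Cp_top K) F \<and>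
       E \<inter> F = {\<lambda>x. 0} \<and>
       (\<exists>P Q. (\<forall>h\<in>Cp_set K. P h \<in> E \<and> Q h \<in> F \<and> h = (\<lambda>x. P h x + Q h x)) \<and>
              continuous_map (Cp_top K) (Cp_top K) P \<and>
              continuous_map (Cp_top K) (Cp_top K) Q) \<and>
       (\<exists>T. lin_map_on E T \<and> homeomorphic_map (subtopology (Cp_top K) E) (Cp_top L) T))"

end

theory Submission
  imports Defs
begin

(* If C_p(K) contains a complemented copy of C_p(L), composing the projection onto the copy with
   the isomorphism gives a continuous linear R : C_p(K) -> C_p(L) and a continuous homogeneous
   S : C_p(L) -> C_p(K) with R o S = id. Every functional f |-> (R f)(y) depends only on the values
   of f on a finite set supp y of K. The size of supp y is lower semicontinuous in y, and where it
   is locally constant the points of supp y move continuously with y. As L is uncountable, some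
   level set of the support size is uncountable, which yields an uncountable compact C in L on
   which supp is given by finitely many continuous maps into K. Their images are compact and
   metrizable, hence countable if all metrizable closed subsets of K are; but every y in C is
   recovered from the finite supports of the functionals g |-> (S g)(x), x in supp y, so C would
   be countable. For K = K1 x K2 the hypothesis on K follows from those on K1 and K2, since the
   projections of a compact metrizable subset are again compact and metrizable. *)

section \<open>Compact metrizable spaces\<close>

lemma (in Metric_space) second_countable_mtopology:
  assumes "compact_space mtopology"
  shows "second_countable mtopology"
proof -
  have "mtotally_bounded M"
    using assms compact_space_eq_mcomplete_mtotally_bounded by blast
  then have "\<forall>k::nat. \<exists>C. finite C \<and> C \<subseteq> M \<and> M \<subseteq> (\<Union>x\<in>C. mball x (1 / Suc k))"
    unfolding mtotally_bounded_def by simp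
  then obtain C where C: "\<And>k. finite (C k)" "\<And>k. M \<subseteq> (\<Union>x\<in>C k. mball x (1 / Suc k))"
    by metis
  define \<B> where "\<B> = (\<Union>k. (\<lambda>x. mball x (1 / Suc k)) ` C k)"
  show ?thesis
    unfolding second_countable_def
  proof (intro exI conjI allI impI ballI)
    show "countable \<B>"
      unfolding \<B>_def by (simp add: C(1) countable_finite)
    show "openin mtopology V" if "V \<in> \<B>" for V
      using that unfolding \<B>_def by auto
    fix U x
    assume "openin mtopology U \<and> x \<in> U"
    then obtain r where "r > 0" "mball x r \<subseteq> U" and x: "x \<in> M"
      by (meson openin_mtopology subsetD)
    then obtain k where k: "1 / Suc k < r / 2"
      using nat_approx_posE[of "r / 2"] by auto
    obtain c where c: "c \<in> C k" "x \<in> mball c (1 / Suc k)"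
      using C(2) x by blast
    have "mball c (1 / Suc k) \<subseteq> mball x r"
    proof
      fix y
      assume y: "y \<in> mball c (1 / Suc k)"
      have "d x y \<le> d x c + d c y"
        using y c x triangle by auto
      also have "\<dots> < r"
        using y c k by (auto simp: commute)
      finally show "y \<in> mball x r"
        using x y by auto
    qed
    then show "\<exists>V\<in>\<B>. x \<in> V \<and> V \<subseteq> U"
      using c \<open>mball x r \<subseteq> U\<close> unfolding \<B>_def by blast
  qed
qed

lemma compact_metrizable_imp_second_countable:
  assumes "metrizable_space X" "compact_space X"
  shows "second_countable X"
  using assms Metric_space.second_countable_mtopology unfolding metrizable_space_def by blast

lemma openin_closed_map_small_image:
  assumes "closed_map X Y f" "openin X U"
  shows "openin Y (topspace Y - f ` (topspace X - U))"
proof -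
  have "closedin X (topspace X - U)"
    using assms(2) by (rule closedin_diff[OF closedin_topspace])
  then have "closedin Y (f ` (topspace X - U))"
    using assms(1) unfolding closed_map_def by blast
  then show ?thesis
    by (rule openin_diff[OF openin_topspace])
qed

text \<open>The sets \<open>topspace Y - f ` (topspace X - \<Union>F)\<close> for finite families \<open>F\<close> of basic open sets
  of \<open>X\<close> form a countable base of \<open>Y\<close>, as \<open>f\<close> is closed and has compact fibres.\<close>

lemma second_countable_continuous_map_image:
  assumes X: "compact_space X" "second_countable X" and Y: "Hausdorff_space Y"
    and f: "continuous_map X Y f" "f ` topspace X = topspace Y"
  shows "second_countable Y"
proof -
  obtain \<B> where \<B>: "countable \<B>" "\<And>V. V \<in> \<B> \<Longrightarrow> openin X V"
    "\<And>U x. openin X U \<Longrightarrow> x \<in> U \<Longrightarrow> \<exists>V\<in>\<B>. x \<in> V \<and> V \<subseteq> U"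
    using X(2) unfolding second_countable_def by (elim exE conjE) blast
  have closed_f: "closed_map X Y f"
    by (rule continuous_imp_closed_map[OF f(1) X(1) Y])
  define co where "co F = topspace Y - f ` (topspace X - \<Union>F)" for F
  show ?thesis
    unfolding second_countable_def
  proof (intro exI conjI allI impI ballI)
    show "countable (co ` {F. finite F \<and> F \<subseteq> \<B>})"
      by (intro countable_image countable_Collect_finite_subset \<B>(1))
    show "openin Y V" if V: "V \<in> co ` {F. finite F \<and> F \<subseteq> \<B>}" for V
    proof -
      obtain F where F: "F \<subseteq> \<B>" "V = co F"
        using V by blast
      have "openin X (\<Union>F)"
        using F(1) \<B>(2) by (intro openin_Union) blast
      then show ?thesis
        unfolding F(2) co_def by (rule openin_closed_map_small_image[OF closed_f])
    qed
    fix U y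
    assume Uy: "openin Y U \<and> y \<in> U"
    define P where "P = {x \<in> topspace X. f x \<in> U}"
    have "openin X P"
      unfolding P_def using openin_continuous_map_preimage[OF f(1)] Uy by blast
    have cover: "{x \<in> topspace X. f x = y} \<subseteq> \<Union>{V\<in>\<B>. V \<subseteq> P}"
      using \<B>(3)[OF \<open>openin X P\<close>] Uy unfolding P_def by blast
    have "y \<in> topspace Y"
      using Uy openin_subset by blast
    then have "closedin X {x \<in> topspace X. f x \<in> {y}}"
      using closedin_continuous_map_preimage[OF f(1)] closedin_Hausdorff_singleton[OF Y] by blast
    then have "compactin X {x \<in> topspace X. f x = y}"
      using closedin_compact_space X(1) by simp
    moreover have "\<And>V. V \<in> {V\<in>\<B>. V \<subseteq> P} \<Longrightarrow> openin X V"
      using \<B>(2) by blast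
    ultimately obtain F where F: "finite F" "F \<subseteq> {V\<in>\<B>. V \<subseteq> P}"
      "{x \<in> topspace X. f x = y} \<subseteq> \<Union>F"
      using compactinD[OF _ _ cover] by meson
    have "y \<in> co F"
      using F(3) \<open>y \<in> topspace Y\<close> unfolding co_def by blast
    moreover have "co F \<subseteq> U"
    proof
      fix z
      assume z: "z \<in> co F"
      then obtain x where "x \<in> topspace X" "z = f x"
        using f(2) unfolding co_def by blast
      then show "z \<in> U"
        using z F(2) unfolding co_def P_def by blast
    qed
    ultimately show "\<exists>V \<in> co ` {F. finite F \<and> F \<subseteq> \<B>}. y \<in> V \<and> V \<subseteq> U"
      using F by blast
  qed
qed

lemma metrizable_space_if_countable_separating_maps:
  assumes Y: "compact_space Y" and I: "countable I"
    and g: "\<And>i. i \<in> I \<Longrightarrow> continuous_map Y euclideanreal (g i)"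
    and sep: "\<And>y y'. y \<in> topspace Y \<Longrightarrow> y' \<in> topspace Y \<Longrightarrow> y \<noteq> y' \<Longrightarrow> \<exists>i\<in>I. g i y \<noteq> g i y'"
  shows "metrizable_space Y"
proof -
  define e where "e y = (\<lambda>i\<in>I. g i y)" for y
  let ?P = "product_topology (\<lambda>_. euclideanreal) I"
  have "continuous_map Y ?P e"
    unfolding e_def continuous_map_componentwise using g by auto
  moreover have "inj_on e (topspace Y)"
  proof (rule inj_onI)
    fix y y'
    assume "y \<in> topspace Y" "y' \<in> topspace Y" "e y = e y'"
    then have "\<forall>i\<in>I. g i y = g i y'"
      unfolding e_def by (metis restrict_apply')
    then show "y = y'"
      using sep \<open>y \<in> topspace Y\<close> \<open>y' \<in> topspace Y\<close> by blast
  qed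
  ultimately have "embedding_map Y ?P e"
    using Y by (simp add: continuous_imp_embedding_map Hausdorff_space_product_topology)
  have "metrizable_space ?P"
    using I by (simp add: metrizable_space_product_topology metrizable_space_euclidean)
  then have "metrizable_space (subtopology ?P (e ` topspace Y))"
    by (rule metrizable_space_subtopology)
  with \<open>embedding_map Y ?P e\<close> show ?thesis
    using embedding_map_imp_homeomorphic_space homeomorphic_metrizable_space by blast
qed

lemma regular_space_base_closure:
  assumes "regular_space Y"
    and \<B>: "\<And>V. V \<in> \<B> \<Longrightarrow> openin Y V" "\<And>U x. openin Y U \<Longrightarrow> x \<in> U \<Longrightarrow> \<exists>V\<in>\<B>. x \<in> V \<and> V \<subseteq> U"
    and "openin Y U" "x \<in> U"
  obtains B where "B \<in> \<B>" "x \<in> B" "Y closure_of B \<subseteq> U"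
proof -
  have "neighbourhood_base_of (closedin Y) Y"
    using assms(1) by (simp add: neighbourhood_base_of_closedin)
  then obtain V C where VC: "openin Y V" "closedin Y C" "x \<in> V" "V \<subseteq> C" "C \<subseteq> U"
    using assms(4,5) unfolding neighbourhood_base_of by meson
  obtain B where B: "B \<in> \<B>" "x \<in> B" "B \<subseteq> V"
    using \<B>(2)[OF VC(1,3)] by blast
  have "Y closure_of B \<subseteq> U"
    using closure_of_minimal[of B C Y] VC B(3) by blast
  then show ?thesis
    using that B by blast
qed

lemma regular_space_base_separation:
  assumes Y: "regular_space Y" "t1_space Y"
    and \<B>: "\<And>V. V \<in> \<B> \<Longrightarrow> openin Y V" "\<And>U x. openin Y U \<Longrightarrow> x \<in> U \<Longrightarrow> \<exists>V\<in>\<B>. x \<in> V \<and> V \<subseteq> U"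
    and z: "z \<in> topspace Y" "z' \<in> topspace Y" "z \<noteq> z'"
  obtains O\<^sub>1 O\<^sub>2 where "O\<^sub>1 \<in> \<B>" "O\<^sub>2 \<in> \<B>" "z \<in> O\<^sub>1" "Y closure_of O\<^sub>1 \<subseteq> O\<^sub>2" "z' \<notin> O\<^sub>2"
proof -
  have "closedin Y {z'}"
    using Y(2) z(2) by (simp add: t1_space_closedin_singleton)
  then have "openin Y (topspace Y - {z'})"
    by (rule openin_diff[OF openin_topspace])
  moreover have "z \<in> topspace Y - {z'}"
    using z by blast
  ultimately obtain O\<^sub>2 where O\<^sub>2: "O\<^sub>2 \<in> \<B>" "z \<in> O\<^sub>2" "z' \<notin> O\<^sub>2"
    using \<B>(2) by blast
  moreover obtain O\<^sub>1 where "O\<^sub>1 \<in> \<B>" "z \<in> O\<^sub>1" "Y closure_of O\<^sub>1 \<subseteq> O\<^sub>2"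
    by (rule regular_space_base_closure[OF Y(1) \<B> \<B>(1)[OF O\<^sub>2(1)] O\<^sub>2(2)])
  ultimately show ?thesis
    using that by blast
qed

text \<open>Urysohn's metrization theorem for compact spaces: the separating maps are Urysohn
  functions for the pairs of basic open sets \<open>(O\<^sub>1, O\<^sub>2)\<close> with the closure of \<open>O\<^sub>1\<close> inside \<open>O\<^sub>2\<close>.\<close>

lemma compact_Hausdorff_second_countable_imp_metrizable:
  assumes Y: "compact_space Y" "Hausdorff_space Y" and "second_countable Y"
  shows "metrizable_space Y"
proof -
  obtain \<B> where \<B>: "countable \<B>" "\<And>V. V \<in> \<B> \<Longrightarrow> openin Y V"
    "\<And>U x. openin Y U \<Longrightarrow> x \<in> U \<Longrightarrow> \<exists>V\<in>\<B>. x \<in> V \<and> V \<subseteq> U"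
    using \<open>second_countable Y\<close> unfolding second_countable_def by (elim exE conjE) blast
  have normal: "normal_space Y"
    using Y compact_Hausdorff_or_regular_imp_normal_space by blast
  define Urysohn where "Urysohn O\<^sub>1 O\<^sub>2 g \<longleftrightarrow> continuous_map Y euclideanreal g \<and>
    (Y closure_of O\<^sub>1 \<subseteq> O\<^sub>2 \<longrightarrow> g ` (Y closure_of O\<^sub>1) \<subseteq> {0} \<and> g ` (topspace Y - O\<^sub>2) \<subseteq> {1})"
    for O\<^sub>1 O\<^sub>2 and g :: "'a \<Rightarrow> real"
  have Urysohn_ex: "\<exists>g. Urysohn O\<^sub>1 O\<^sub>2 g" if "O\<^sub>2 \<in> \<B>" for O\<^sub>1 O\<^sub>2
  proof (cases "Y closure_of O\<^sub>1 \<subseteq> O\<^sub>2")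
    case True
    then have "disjnt (Y closure_of O\<^sub>1) (topspace Y - O\<^sub>2)"
      by (auto simp: disjnt_def)
    moreover have "closedin Y (topspace Y - O\<^sub>2)"
      using \<B>(2)[OF that] by (rule closedin_diff[OF closedin_topspace])
    ultimately obtain g where "continuous_map Y euclideanreal g"
      "g ` (Y closure_of O\<^sub>1) \<subseteq> {0}" "g ` (topspace Y - O\<^sub>2) \<subseteq> {1}"
      using Urysohn_lemma_alt[OF normal closedin_closure_of, where a = 0 and b = 1] by metis
    then show ?thesis
      unfolding Urysohn_def by blast
  next
    case False
    then show ?thesis
      unfolding Urysohn_def by (intro exI[of _ "\<lambda>_. 0"]) simp
  qed
  define g where "g p = (SOME g. Urysohn (fst p) (snd p) g)" for p
  have g: "Urysohn O\<^sub>1 O\<^sub>2 (g (O\<^sub>1, O\<^sub>2))" if "O\<^sub>2 \<in> \<B>" for O\<^sub>1 O\<^sub>2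
    unfolding g_def using someI_ex[OF Urysohn_ex[OF that]] by simp
  show ?thesis
  proof (rule metrizable_space_if_countable_separating_maps[OF Y(1)])
    show "countable (\<B> \<times> \<B>)"
      using \<B>(1) by simp
    show "continuous_map Y euclideanreal (g p)" if "p \<in> \<B> \<times> \<B>" for p
      using that g unfolding Urysohn_def by (cases p) blast
    fix z z'
    assume z: "z \<in> topspace Y" "z' \<in> topspace Y" "z \<noteq> z'"
    have "regular_space Y" "t1_space Y"
      using Y by (simp_all add: compact_Hausdorff_imp_regular_space Hausdorff_imp_t1_space)
    then obtain O\<^sub>1 O\<^sub>2 where O: "O\<^sub>1 \<in> \<B>" "O\<^sub>2 \<in> \<B>" "z \<in> O\<^sub>1" "Y closure_of O\<^sub>1 \<subseteq> O\<^sub>2" "z' \<notin> O\<^sub>2"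
      using regular_space_base_separation[OF _ _ \<B>(2,3) z] by blast
    have "z \<in> Y closure_of O\<^sub>1"
      using O(3) z(1) closure_of_subset_Int by fastforce
    then have "g (O\<^sub>1, O\<^sub>2) z = 0"
      using g[OF O(2)] O(4) unfolding Urysohn_def by blast
    moreover have "g (O\<^sub>1, O\<^sub>2) z' = 1"
      using g[OF O(2)] O(4,5) z(2) unfolding Urysohn_def by blast
    ultimately show "\<exists>p\<in>\<B> \<times> \<B>. g p z \<noteq> g p z'"
      using O(1,2) by force
  qed
qed

lemma metrizable_space_continuous_map_image:
  assumes X: "compact_space X" "metrizable_space X" and "Hausdorff_space Y"
    and f: "continuous_map X Y f"
  shows "metrizable_space (subtopology Y (f ` topspace X))"
proof -
  let ?Z = "subtopology Y (f ` topspace X)"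
  have fZ: "continuous_map X ?Z f" "f ` topspace X = topspace ?Z"
    using f continuous_map_image_subset_topspace[OF f]
    by (auto simp: continuous_map_in_subtopology)
  have "compactin Y (f ` topspace X)"
    using X(1) f by (simp add: compact_space_def image_compactin)
  then have "compact_space ?Z"
    by (rule compact_space_subtopology)
  moreover have "Hausdorff_space ?Z"
    using \<open>Hausdorff_space Y\<close> by (rule Hausdorff_space_subtopology)
  moreover have "second_countable ?Z"
    using second_countable_continuous_map_image[OF X(1) _ _ fZ]
      compact_metrizable_imp_second_countable[OF X(2,1)] \<open>Hausdorff_space ?Z\<close> by blast
  ultimately show ?thesis
    by (rule compact_Hausdorff_second_countable_imp_metrizable)
qed

definition countable_metrizable_closedin :: "'a topology \<Rightarrow> bool" where
  "countable_metrizable_closedin K \<longleftrightarrow>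
     (\<forall>S. closedin K S \<and> metrizable_space (subtopology K S) \<longrightarrow> countable S)"

lemma countable_continuous_map_image:
  assumes K: "Hausdorff_space K" "countable_metrizable_closedin K"
    and X: "compact_space X" "metrizable_space X" and f: "continuous_map X K f"
  shows "countable (f ` topspace X)"
proof -
  have "compactin K (f ` topspace X)"
    using X(1) f by (simp add: compact_space_def image_compactin)
  then have "closedin K (f ` topspace X)"
    by (rule compactin_imp_closedin[OF K(1)])
  moreover have "metrizable_space (subtopology K (f ` topspace X))"
    by (rule metrizable_space_continuous_map_image[OF X K(1) f])
  ultimately show ?thesis
    using K(2) unfolding countable_metrizable_closedin_def by blast
qed

lemma countable_metrizable_closedin_prod_topology:
  assumes "compact_space K\<^sub>1" "Hausdorff_space K\<^sub>1" "countable_metrizable_closedin K\<^sub>1"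
    and "compact_space K\<^sub>2" "Hausdorff_space K\<^sub>2" "countable_metrizable_closedin K\<^sub>2"
  shows "countable_metrizable_closedin (prod_topology K\<^sub>1 K\<^sub>2)"
  unfolding countable_metrizable_closedin_def
proof (intro allI impI, elim conjE)
  fix S
  assume S: "closedin (prod_topology K\<^sub>1 K\<^sub>2) S"
    and metrizable: "metrizable_space (subtopology (prod_topology K\<^sub>1 K\<^sub>2) S)"
  let ?X = "subtopology (prod_topology K\<^sub>1 K\<^sub>2) S"
  have "compact_space (prod_topology K\<^sub>1 K\<^sub>2)"
    using assms by (simp add: compact_space_prod_topology)
  then have compact: "compact_space ?X"
    using S by (simp add: closedin_compact_space compact_space_subtopology)
  have "topspace ?X = S"
    using closedin_subset[OF S] by auto
  then have "countable (fst ` S)" "countable (snd ` S)"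
    using countable_continuous_map_image[OF _ _ compact metrizable,
        OF _ _ continuous_map_from_subtopology[OF continuous_map_fst]]
      countable_continuous_map_image[OF _ _ compact metrizable,
        OF _ _ continuous_map_from_subtopology[OF continuous_map_snd]] assms
    by auto
  moreover have "S \<subseteq> fst ` S \<times> snd ` S"
    by force
  ultimately show "countable S"
    by (meson countable_SIGMA countable_subset)
qed

lemma Hausdorff_space_finite_separation:
  assumes "Hausdorff_space X" "finite A" "A \<subseteq> topspace X"
  obtains U where "\<And>x. x \<in> A \<Longrightarrow> openin X (U x)" "\<And>x. x \<in> A \<Longrightarrow> x \<in> U x"
    "disjoint_family_on U A"
proof -
  have "\<forall>x y. \<exists>V W. x \<in> topspace X \<and> y \<in> topspace X \<and> x \<noteq> y \<longrightarrow>
          openin X V \<and> openin X W \<and> x \<in> V \<and> y \<in> W \<and> disjnt V W"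
    using assms(1) unfolding Hausdorff_space_def by blast
  then obtain V W where VW: "\<And>x y. x \<in> topspace X \<Longrightarrow> y \<in> topspace X \<Longrightarrow> x \<noteq> y \<Longrightarrow>
      openin X (V x y) \<and> openin X (W x y) \<and> x \<in> V x y \<and> y \<in> W x y \<and> disjnt (V x y) (W x y)"
    by metis
  define U where "U x = topspace X \<inter> \<Inter> ((\<lambda>x'. V x x' \<inter> W x' x) ` (A - {x}))" for x
  show ?thesis
  proof (rule that)
    show "openin X (U x)" if "x \<in> A" for x
      unfolding U_def
    proof (rule openin_Int_Inter)
      show "finite ((\<lambda>x'. V x x' \<inter> W x' x) ` (A - {x}))"
        using assms(2) by simp
    next
      fix S
      assume "S \<in> (\<lambda>x'. V x x' \<inter> W x' x) ` (A - {x})"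
      then show "openin X S"
        using VW that assms(3) by blast
    qed simp
    show "x \<in> U x" if "x \<in> A" for x
      unfolding U_def using VW that assms(3) by auto
    show "disjoint_family_on U A"
      unfolding disjoint_family_on_def
    proof (intro ballI impI)
      fix x x'
      assume "x \<in> A" "x' \<in> A" "x \<noteq> x'"
      then have "U x \<subseteq> V x x'" "U x' \<subseteq> W x x'" "disjnt (V x x') (W x x')"
        using VW assms(3) unfolding U_def by blast+
      then show "U x \<inter> U x' = {}"
        by (auto simp: disjnt_def)
    qed
  qed
qed

lemma second_countable_uncountable_localize:
  assumes X: "second_countable X" "regular_space X" and "uncountable D"
    and W: "\<And>y. y \<in> D \<Longrightarrow> openin X (W y)" "\<And>y. y \<in> D \<Longrightarrow> y \<in> W y"
  obtains y B where "y \<in> D" "openin X B" "X closure_of B \<subseteq> W y" "uncountable (B \<inter> D)"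
proof -
  obtain \<B> where \<B>: "countable \<B>" "\<And>V. V \<in> \<B> \<Longrightarrow> openin X V"
    "\<And>U x. openin X U \<Longrightarrow> x \<in> U \<Longrightarrow> \<exists>V\<in>\<B>. x \<in> V \<and> V \<subseteq> U"
    using X(1) unfolding second_countable_def by (elim exE conjE) blast
  have "\<exists>B\<in>\<B>. y \<in> B \<and> X closure_of B \<subseteq> W y" if y: "y \<in> D" for y
  proof -
    obtain B where "B \<in> \<B>" "y \<in> B" "X closure_of B \<subseteq> W y"
      by (rule regular_space_base_closure[OF X(2) \<B>(2,3) W[OF y]])
    then show ?thesis
      by blast
  qed
  then have "\<forall>y\<in>D. \<exists>B. B \<in> \<B> \<and> y \<in> B \<and> X closure_of B \<subseteq> W y"
    by blast
  from bchoice[OF this] obtain \<beta>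
    where \<beta>: "\<forall>y\<in>D. \<beta> y \<in> \<B> \<and> y \<in> \<beta> y \<and> X closure_of (\<beta> y) \<subseteq> W y"
    by blast
  have "\<exists>y\<in>D. uncountable (\<beta> y \<inter> D)"
  proof (rule ccontr)
    assume "\<not> (\<exists>y\<in>D. uncountable (\<beta> y \<inter> D))"
    then have "\<And>B. B \<in> \<beta> ` D \<Longrightarrow> countable (B \<inter> D)"
      by blast
    moreover have "countable (\<beta> ` D)"
      by (rule countable_subset[OF _ \<B>(1)]) (use \<beta> in blast)
    ultimately have "countable (\<Union>B\<in>\<beta> ` D. B \<inter> D)"
      by (rule countable_UN[rotated])
    moreover have "D \<subseteq> (\<Union>B\<in>\<beta> ` D. B \<inter> D)"
      using \<beta> by blast
    ultimately show False
      using \<open>uncountable D\<close> countable_subset by blast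
  qed
  then show ?thesis
    using that \<beta> \<B>(2) by blast
qed

lemma uncountable_nat_level_set:
  fixes f :: "'a \<Rightarrow> nat"
  assumes "uncountable A"
  obtains n where "uncountable {x \<in> A. f x = n}"
proof -
  have "\<exists>n. uncountable {x \<in> A. f x = n}"
  proof (rule ccontr)
    assume "\<nexists>n. uncountable {x \<in> A. f x = n}"
    then have "countable (\<Union>n. {x \<in> A. f x = n})"
      by (intro countable_UN countableI_type) blast
    moreover have "A = (\<Union>n. {x \<in> A. f x = n})"
      by auto
    ultimately show False
      using assms by simp
  qed
  then show ?thesis
    using that by blast
qed

lemma inj_on_if_disjoint_family_on:
  assumes "disjoint_family_on U I" "\<And>x. x \<in> I \<Longrightarrow> p x \<in> U x"
  shows "inj_on p I"
proof (rule inj_onI)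
  fix x x'
  assume "x \<in> I" "x' \<in> I" "p x = p x'"
  then have "U x \<inter> U x' \<noteq> {}"
    using assms(2) by (metis disjoint_iff)
  then show "x = x'"
    using assms(1) \<open>x \<in> I\<close> \<open>x' \<in> I\<close> unfolding disjoint_family_on_def by blast
qed

lemma image_eq_if_disjoint_family_on:
  assumes A: "finite A" and disj: "disjoint_family_on U I" and p: "\<And>x. x \<in> I \<Longrightarrow> p x \<in> A \<inter> U x"
    and "card A \<le> card I"
  shows "p ` I = A" and "\<And>x. x \<in> I \<Longrightarrow> A \<inter> U x = {p x}"
proof -
  have "inj_on p I"
    using disj p by (blast intro: inj_on_if_disjoint_family_on)
  then have "card (p ` I) = card I"
    by (rule card_image)
  moreover have sub: "p ` I \<subseteq> A"
    using p by blast
  moreover have "card (p ` I) \<le> card A"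
    using card_mono[OF A sub] .
  ultimately show eq: "p ` I = A"
    using card_subset_eq[OF A sub] \<open>card A \<le> card I\<close> by linarith
  show "A \<inter> U x = {p x}" if x: "x \<in> I" for x
  proof
    show "{p x} \<subseteq> A \<inter> U x"
      using p[OF x] by blast
    show "A \<inter> U x \<subseteq> {p x}"
    proof
      fix z
      assume z: "z \<in> A \<inter> U x"
      then obtain x' where x': "x' \<in> I" "z = p x'"
        using eq by blast
      then have "z \<in> U x'"
        using p by blast
      then have "x' = x"
        using disj x x'(1) z unfolding disjoint_family_on_def by blast
      then show "z \<in> {p x}"
        using x' by simp
    qed
  qed
qed

section \<open>The spaces \<open>C\<^sub>p\<close>\<close>

lemma Cp_set_continuous_map: "f \<in> Cp_set X \<Longrightarrow> continuous_map X euclideanreal f"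
  unfolding Cp_set_def by blast

lemma Cp_set_outside: "f \<in> Cp_set X \<Longrightarrow> x \<notin> topspace X \<Longrightarrow> f x = 0"
  unfolding Cp_set_def by blast

lemma Cp_set_zero: "(\<lambda>x. 0) \<in> Cp_set X"
  unfolding Cp_set_def by simp

lemma Cp_set_add: "f \<in> Cp_set X \<Longrightarrow> g \<in> Cp_set X \<Longrightarrow> (\<lambda>x. f x + g x) \<in> Cp_set X"
  unfolding Cp_set_def by (auto intro: continuous_map_add)

lemma Cp_set_diff: "f \<in> Cp_set X \<Longrightarrow> g \<in> Cp_set X \<Longrightarrow> (\<lambda>x. f x - g x) \<in> Cp_set X"
  unfolding Cp_set_def by (auto intro: continuous_map_diff)

lemma Cp_set_mult: "f \<in> Cp_set X \<Longrightarrow> g \<in> Cp_set X \<Longrightarrow> (\<lambda>x. f x * g x) \<in> Cp_set X"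
  unfolding Cp_set_def by (auto intro: continuous_map_real_mult)

lemma Cp_set_scale: "f \<in> Cp_set X \<Longrightarrow> (\<lambda>x. c * f x) \<in> Cp_set X"
  unfolding Cp_set_def by (auto intro: continuous_map_real_mult)

lemma topspace_Cp_top [simp]: "topspace (Cp_top X) = Cp_set X"
  unfolding Cp_top_def by simp

lemma continuous_map_Cp_top_eval: "continuous_map (Cp_top X) euclideanreal (\<lambda>f. f y)"
proof -
  have "continuous_map (product_topology (\<lambda>_. euclideanreal) UNIV) euclideanreal (\<lambda>f. f y)"
    by (rule continuous_map_product_projection) simp
  then show ?thesis
    unfolding Cp_top_def euclidean_product_topology[symmetric]
    by (rule continuous_map_from_subtopology)
qed

lemma Cp_set_bump:
  assumes "normal_space X" "t1_space X" "x \<in> V" "openin X V"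
  obtains h where "h \<in> Cp_set X" "h x = 1" "\<And>z. z \<notin> V \<Longrightarrow> h z = 0"
proof -
  have "x \<in> topspace X"
    using assms(3,4) openin_subset by blast
  then have "closedin X {x}"
    using \<open>t1_space X\<close> by (simp add: t1_space_closedin_singleton)
  moreover have "closedin X (topspace X - V)"
    by (rule closedin_diff[OF closedin_topspace \<open>openin X V\<close>])
  moreover have "disjnt {x} (topspace X - V)"
    using \<open>x \<in> V\<close> by (simp add: disjnt_def)
  ultimately obtain f where f: "continuous_map X euclideanreal f"
    "f ` {x} \<subseteq> {1}" "f ` (topspace X - V) \<subseteq> {0}"
    using Urysohn_lemma_alt[OF \<open>normal_space X\<close>, where a = 1 and b = 0] by metis
  define h where "h z = (if z \<in> topspace X then f z else 0)" for z
  have "continuous_map X euclideanreal h"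
    by (rule continuous_map_eq[OF f(1)]) (simp add: h_def)
  then have "h \<in> Cp_set X"
    unfolding Cp_set_def h_def by simp
  moreover have "h x = 1"
    using f(2) \<open>x \<in> topspace X\<close> unfolding h_def by simp
  moreover have "h z = 0" if "z \<notin> V" for z
    using f(3) that unfolding h_def by auto
  ultimately show ?thesis
    using that by blast
qed

text \<open>A neighbourhood of \<open>0\<close> in \<open>C\<^sub>p(X)\<close> on which \<open>\<bar>\<phi>\<bar> < 1\<close> constrains only the values on a
  finite set \<open>J\<close>; it contains every multiple of a function vanishing on \<open>J\<close>, so homogeneity
  forces \<open>\<phi>\<close> to vanish there.\<close>

lemma Cp_functional_finite_support:
  assumes cont: "continuous_map (Cp_top X) euclideanreal \<phi>"
    and hom: "\<And>c f. f \<in> Cp_set X \<Longrightarrow> \<phi> (\<lambda>x. c * f x) = c * \<phi> f"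
  obtains J where "finite J" "J \<subseteq> topspace X"
    "\<And>f. f \<in> Cp_set X \<Longrightarrow> (\<forall>x\<in>J. f x = 0) \<Longrightarrow> \<phi> f = 0"
proof -
  define N where "N = {f \<in> topspace (Cp_top X). \<phi> f \<in> {-1<..<1}}"
  have "openin (Cp_top X) N"
    unfolding N_def by (rule openin_continuous_map_preimage[OF cont]) simp
  then obtain T where T: "openin euclidean T" "N = T \<inter> Cp_set X"
    unfolding Cp_top_def openin_subtopology by blast
  have "\<phi> (\<lambda>x. 0) = 0"
    using hom[OF Cp_set_zero, of 0] by simp
  then have "(\<lambda>x. 0) \<in> N"
    unfolding N_def using Cp_set_zero by simp
  moreover have "openin (product_topology (\<lambda>_. euclideanreal) UNIV) T"
    using T(1) by (simp add: euclidean_product_topology)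
  ultimately obtain U where U: "finite {i. U i \<noteq> UNIV}" "(\<lambda>x. 0::real) \<in> Pi\<^sub>E UNIV U"
    "Pi\<^sub>E UNIV U \<subseteq> T"
    using T(2) unfolding openin_product_topology_alt by auto
  define J where "J = {i. U i \<noteq> UNIV} \<inter> topspace X"
  show ?thesis
  proof (rule that)
    show "finite J" "J \<subseteq> topspace X"
      using U(1) unfolding J_def by auto
    fix f
    assume f: "f \<in> Cp_set X" and "\<forall>x\<in>J. f x = 0"
    then have "f i = 0" if "U i \<noteq> UNIV" for i
      using Cp_set_outside[OF f] that unfolding J_def by blast
    then have "(\<lambda>x. c * f x) \<in> Pi\<^sub>E UNIV U" for c
      using U(2) by (fastforce simp: PiE_iff)
    then have "(\<lambda>x. c * f x) \<in> N" for c
      unfolding T(2) using Cp_set_scale[OF f] U(3) by (meson IntI subsetD)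
    then have small: "\<bar>c * \<phi> f\<bar> < 1" for c
      unfolding N_def using hom[OF f] by (simp add: abs_less_iff)
    show "\<phi> f = 0"
    proof (rule ccontr)
      assume "\<phi> f \<noteq> 0"
      then show False
        using small[of "1 / \<phi> f"] by simp
    qed
  qed
qed

section \<open>Complemented copies of \<open>C\<^sub>p(L)\<close>\<close>

lemma lin_subspace_add: "lin_subspace E \<Longrightarrow> f \<in> E \<Longrightarrow> g \<in> E \<Longrightarrow> (\<lambda>x. f x + g x) \<in> E"
  unfolding lin_subspace_def by blast

lemma lin_subspace_scale: "lin_subspace E \<Longrightarrow> f \<in> E \<Longrightarrow> (\<lambda>x. c * f x) \<in> E"
  unfolding lin_subspace_def by blast

lemma lin_subspace_diff: "lin_subspace E \<Longrightarrow> f \<in> E \<Longrightarrow> g \<in> E \<Longrightarrow> (\<lambda>x. f x - g x) \<in> E"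
  using lin_subspace_add[of E f "\<lambda>x. (-1) * g x"] lin_subspace_scale[of E g "-1"] by simp

lemma direct_sum_unique:
  assumes E: "lin_subspace E" and F: "lin_subspace F" and EF: "E \<inter> F = {\<lambda>x. 0}"
    and "a \<in> E" "a' \<in> E" "b \<in> F" "b' \<in> F" and eq: "\<And>x. a x + b x = a' x + b' x"
  shows "a = a'"
proof -
  have "(\<lambda>x. a x - a' x) = (\<lambda>x. b' x - b x)"
  proof
    show "a x - a' x = b' x - b x" for x
      using eq[of x] by linarith
  qed
  moreover have "(\<lambda>x. a x - a' x) \<in> E" "(\<lambda>x. b' x - b x) \<in> F"
    using lin_subspace_diff[OF E \<open>a \<in> E\<close> \<open>a' \<in> E\<close>] lin_subspace_diff[OF F \<open>b' \<in> F\<close> \<open>b \<in> F\<close>]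
    by auto
  ultimately have "(\<lambda>x. a x - a' x) \<in> E \<inter> F"
    by simp
  then have "(\<lambda>x. a x - a' x) = (\<lambda>x. 0)"
    unfolding EF by simp
  then show "a = a'"
    by (simp add: fun_eq_iff)
qed

lemma direct_sum_projection:
  assumes E: "lin_subspace E" and F: "lin_subspace F" and EF: "E \<inter> F = {\<lambda>x. 0}"
    and "E \<subseteq> Cp_set K"
    and PQ: "\<forall>h\<in>Cp_set K. P h \<in> E \<and> Q h \<in> F \<and> h = (\<lambda>x. P h x + Q h x)"
  shows "lin_map_on (Cp_set K) P" and "\<And>u. u \<in> E \<Longrightarrow> P u = u"
proof -
  have P: "P h \<in> E" and Q: "Q h \<in> F" if "h \<in> Cp_set K" for h
    using PQ that by blast+
  have PQ_eq: "h x = P h x + Q h x" if "h \<in> Cp_set K" for h x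
  proof -
    have "h = (\<lambda>x. P h x + Q h x)"
      using PQ that by blast
    then show ?thesis
      using fun_cong[of h "\<lambda>x. P h x + Q h x" x] by simp
  qed
  have P_eqI: "P h = u" if "h \<in> Cp_set K" "u \<in> E" "v \<in> F" "\<And>x. u x + v x = h x" for h u v
  proof (rule direct_sum_unique[OF E F EF P[OF that(1)] that(2) Q[OF that(1)] that(3)])
    show "P h x + Q h x = u x + v x" for x
      using PQ_eq[OF that(1), of x] that(4)[of x] by simp
  qed
  show "lin_map_on (Cp_set K) P"
    unfolding lin_map_on_def
  proof (intro conjI ballI allI)
    fix f g
    assume f: "f \<in> Cp_set K" and g: "g \<in> Cp_set K"
    show "P (\<lambda>x. f x + g x) = (\<lambda>y. P f y + P g y)"
    proof (rule P_eqI)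
      show "(\<lambda>x. P f x + P g x) \<in> E" "(\<lambda>x. Q f x + Q g x) \<in> F"
        using f g P Q by (simp_all add: lin_subspace_add E F)
      show "P f x + P g x + (Q f x + Q g x) = f x + g x" for x
        using PQ_eq[OF f, of x] PQ_eq[OF g, of x] by simp
    qed (simp add: Cp_set_add f g)
  next
    fix c f
    assume f: "f \<in> Cp_set K"
    show "P (\<lambda>x. c * f x) = (\<lambda>y. c * P f y)"
    proof (rule P_eqI)
      show "(\<lambda>x. c * P f x) \<in> E" "(\<lambda>x. c * Q f x) \<in> F"
        using f P Q by (simp_all add: lin_subspace_scale E F)
      show "c * P f x + c * Q f x = c * f x" for x
        using PQ_eq[OF f, of x] by (simp add: distrib_left)
    qed (simp add: Cp_set_scale f)
  qed
  show "P u = u" if "u \<in> E" for u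
  proof (rule P_eqI)
    show "(\<lambda>x. 0) \<in> F"
      using F unfolding lin_subspace_def by blast
  qed (use that \<open>E \<subseteq> Cp_set K\<close> in auto)
qed

locale Cp_factorization =
  fixes K :: "'a topology" and L :: "'b topology"
    and R :: "('a \<Rightarrow> real) \<Rightarrow> 'b \<Rightarrow> real" and S :: "('b \<Rightarrow> real) \<Rightarrow> 'a \<Rightarrow> real"
  assumes R_cont: "continuous_map (Cp_top K) (Cp_top L) R"
    and R_lin: "lin_map_on (Cp_set K) R"
    and S_cont: "continuous_map (Cp_top L) (Cp_top K) S"
    and S_scale: "\<And>c g. g \<in> Cp_set L \<Longrightarrow> S (\<lambda>y. c * g y) = (\<lambda>x. c * S g x)"
    and R_S: "\<And>g. g \<in> Cp_set L \<Longrightarrow> R (S g) = g"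

lemma homeomorphic_map_linear_inverse:
  assumes E: "E \<subseteq> Cp_set K" "lin_subspace E"
    and T: "lin_map_on E T" "homeomorphic_map (subtopology (Cp_top K) E) (Cp_top L) T"
  obtains T' where "continuous_map (Cp_top L) (Cp_top K) T'"
    "\<And>g. g \<in> Cp_set L \<Longrightarrow> T' g \<in> E" "\<And>g. g \<in> Cp_set L \<Longrightarrow> T (T' g) = g"
    "\<And>c g. g \<in> Cp_set L \<Longrightarrow> T' (\<lambda>y. c * g y) = (\<lambda>x. c * T' g x)"
proof -
  obtain T' where T': "homeomorphic_maps (subtopology (Cp_top K) E) (Cp_top L) T T'"
    using T(2) homeomorphic_map_maps by blast
  have topspace_E: "topspace (subtopology (Cp_top K) E) = E"
    using E(1) by auto
  have T'_cont: "continuous_map (Cp_top L) (subtopology (Cp_top K) E) T'"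
    and T'_T: "\<And>u. u \<in> E \<Longrightarrow> T' (T u) = u"
    and T_T': "\<And>g. g \<in> Cp_set L \<Longrightarrow> T (T' g) = g"
    using T' topspace_E unfolding homeomorphic_maps_def by auto
  have T'_in: "T' g \<in> E" if "g \<in> Cp_set L" for g
    using continuous_map_image_subset_topspace[OF T'_cont] that topspace_E by auto
  have "T' (\<lambda>y. c * g y) = (\<lambda>x. c * T' g x)" if g: "g \<in> Cp_set L" for c g
  proof -
    have "(\<lambda>x. c * T' g x) \<in> E"
      using lin_subspace_scale[OF E(2) T'_in[OF g]] .
    moreover have "T (\<lambda>x. c * T' g x) = (\<lambda>y. c * g y)"
      using T(1) T'_in[OF g] T_T'[OF g] unfolding lin_map_on_def by simp
    ultimately show ?thesis
      using T'_T by metis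
  qed
  moreover have "continuous_map (Cp_top L) (Cp_top K) T'"
    using T'_cont by (simp add: continuous_map_in_subtopology)
  ultimately show ?thesis
    using that T'_in T_T' by blast
qed

lemma Cp_factorization_if_contains_complemented_Cp:
  assumes "contains_complemented_Cp K L"
  obtains R S where "Cp_factorization K L R S"
proof -
  obtain E F P Q T where E: "E \<subseteq> Cp_set K" "lin_subspace E"
    and decomp: "lin_subspace F" "E \<inter> F = {\<lambda>x. 0}"
      "\<forall>h\<in>Cp_set K. P h \<in> E \<and> Q h \<in> F \<and> h = (\<lambda>x. P h x + Q h x)"
    and P_cont: "continuous_map (Cp_top K) (Cp_top K) P"
    and T: "lin_map_on E T" "homeomorphic_map (subtopology (Cp_top K) E) (Cp_top L) T"
    using assms unfolding contains_complemented_Cp_def by blast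
  obtain T' where T': "continuous_map (Cp_top L) (Cp_top K) T'"
    "\<And>g. g \<in> Cp_set L \<Longrightarrow> T' g \<in> E" "\<And>g. g \<in> Cp_set L \<Longrightarrow> T (T' g) = g"
    "\<And>c g. g \<in> Cp_set L \<Longrightarrow> T' (\<lambda>y. c * g y) = (\<lambda>x. c * T' g x)"
    using homeomorphic_map_linear_inverse[OF E T] by blast
  have P: "lin_map_on (Cp_set K) P" "\<And>u. u \<in> E \<Longrightarrow> P u = u"
    using direct_sum_projection[OF E(2) decomp(1,2) E(1) decomp(3)] by blast+
  have P_in: "P h \<in> E" if "h \<in> Cp_set K" for h
    using decomp(3) that by blast
  show ?thesis
  proof (rule that[of "T \<circ> P" T'], unfold_locales)
    have "continuous_map (Cp_top K) (subtopology (Cp_top K) E) P"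
      using P_cont P_in by (simp add: continuous_map_in_subtopology image_subset_iff)
    then show "continuous_map (Cp_top K) (Cp_top L) (T \<circ> P)"
      using T(2) homeomorphic_imp_continuous_map by (blast intro: continuous_map_compose)
    show "lin_map_on (Cp_set K) (T \<circ> P)"
      using P(1) T(1) P_in unfolding lin_map_on_def by simp
    show "(T \<circ> P) (T' g) = g" if "g \<in> Cp_set L" for g
      using P(2) T'(2,3) that by simp
  qed (use T' in auto)
qed

section \<open>Supports of the functionals \<open>f \<mapsto> R f y\<close>\<close>

context Cp_factorization
begin

lemma R_in: "f \<in> Cp_set K \<Longrightarrow> R f \<in> Cp_set L"
  using continuous_map_image_subset_topspace[OF R_cont] by auto

lemma S_in: "g \<in> Cp_set L \<Longrightarrow> S g \<in> Cp_set K"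
  using continuous_map_image_subset_topspace[OF S_cont] by auto

lemma R_scale: "f \<in> Cp_set K \<Longrightarrow> R (\<lambda>x. c * f x) = (\<lambda>y. c * R f y)"
  using R_lin unfolding lin_map_on_def by blast

lemma R_add: "f \<in> Cp_set K \<Longrightarrow> g \<in> Cp_set K \<Longrightarrow> R (\<lambda>x. f x + g x) = (\<lambda>y. R f y + R g y)"
  using R_lin unfolding lin_map_on_def by blast

lemma R_diff:
  assumes "f \<in> Cp_set K" "g \<in> Cp_set K"
  shows "R (\<lambda>x. f x - g x) y = R f y - R g y"
proof -
  have "R (\<lambda>x. f x - g x) y = R (\<lambda>x. f x + (-1) * g x) y"
    by simp
  also have "\<dots> = R f y + R (\<lambda>x. (-1) * g x) y"
    by (simp only: R_add[OF assms(1) Cp_set_scale[OF assms(2)]])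
  also have "\<dots> = R f y - R g y"
    using R_scale[OF assms(2), of "-1"] by simp
  finally show ?thesis .
qed

lemma continuous_map_R_eval: "continuous_map (Cp_top K) euclideanreal (\<lambda>f. R f y)"
  using continuous_map_compose[OF R_cont continuous_map_Cp_top_eval] by (simp add: o_def)

lemma continuous_map_S_eval: "continuous_map (Cp_top L) euclideanreal (\<lambda>g. S g x)"
  using continuous_map_compose[OF S_cont continuous_map_Cp_top_eval] by (simp add: o_def)

text \<open>The functional \<open>f \<mapsto> R f y\<close> is a finite linear combination of point evaluations;
  \<open>supp y\<close> plays the role of its support, taken as a finite set of minimal cardinality on
  which the functional depends.\<close>

definition supports :: "'b \<Rightarrow> 'a set \<Rightarrow> bool" where
  "supports y A \<longleftrightarrow> finite A \<and> A \<subseteq> topspace K \<and> (\<forall>f\<in>Cp_set K. (\<forall>x\<in>A. f x = 0) \<longrightarrow> R f y = 0)"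

definition supp_card :: "'b \<Rightarrow> nat" where
  "supp_card y = (LEAST n. \<exists>A. supports y A \<and> card A = n)"

definition supp :: "'b \<Rightarrow> 'a set" where
  "supp y = (SOME A. supports y A \<and> card A = supp_card y)"

lemma supports_supp: "supports y (supp y)" and card_supp: "card (supp y) = supp_card y"
proof -
  obtain A where "supports y A"
  proof (rule Cp_functional_finite_support[OF continuous_map_R_eval])
    show "R (\<lambda>x. c * f x) y = c * R f y" if "f \<in> Cp_set K" for c f
      using R_scale[OF that] by simp
  qed (use that in \<open>unfold supports_def, blast\<close>)
  then have "\<exists>n A. supports y A \<and> card A = n"
    by blast
  then have "\<exists>A. supports y A \<and> card A = supp_card y"
    unfolding supp_card_def by (rule LeastI_ex)
  then have "supports y (supp y) \<and> card (supp y) = supp_card y"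
    unfolding supp_def by (rule someI_ex)
  then show "supports y (supp y)" "card (supp y) = supp_card y"
    by blast+
qed

lemma finite_supp: "finite (supp y)"
  using supports_supp unfolding supports_def by blast

lemma supp_subset: "supp y \<subseteq> topspace K"
  using supports_supp unfolding supports_def by blast

lemma R_eq_0_if_vanishes_on_supp: "f \<in> Cp_set K \<Longrightarrow> (\<And>x. x \<in> supp y \<Longrightarrow> f x = 0) \<Longrightarrow> R f y = 0"
  using supports_supp unfolding supports_def by blast

lemma supp_card_le: "supports y A \<Longrightarrow> supp_card y \<le> card A"
  unfolding supp_card_def by (rule Least_le) blast

definition S_supports :: "'a \<Rightarrow> 'b set \<Rightarrow> bool" where
  "S_supports x J \<longleftrightarrow> finite J \<and> J \<subseteq> topspace L \<and> (\<forall>g\<in>Cp_set L. (\<forall>w\<in>J. g w = 0) \<longrightarrow> S g x = 0)"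

lemma S_supports_exists: "\<exists>J. S_supports x J"
proof (rule Cp_functional_finite_support[OF continuous_map_S_eval])
  show "S (\<lambda>y. c * g y) x = c * S g x" if "g \<in> Cp_set L" for c g
    using S_scale[OF that] by simp
qed (unfold S_supports_def, blast)

end

locale Cp_factorization_compact = Cp_factorization +
  assumes K_compact: "compact_space K" and K_Hausdorff: "Hausdorff_space K"
    and L_compact: "compact_space L" and L_metrizable: "metrizable_space L"
begin

lemma K_normal: "normal_space K"
  using K_compact K_Hausdorff compact_Hausdorff_or_regular_imp_normal_space by blast

lemma K_t1: "t1_space K"
  using K_Hausdorff by (rule Hausdorff_imp_t1_space)

lemma L_t1: "t1_space L"
  using L_metrizable by (rule metrizable_imp_t1_space)

lemma L_normal: "normal_space L"
  using L_metrizable by (rule metrizable_imp_normal_space)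

text \<open>By minimality \<open>supp y - {x}\<close> is not a support, which is witnessed by some \<open>g\<close>; cutting \<open>g\<close>
  off outside \<open>V\<close> by a bump that is \<open>1\<close> at \<open>x\<close> and \<open>0\<close> on \<open>supp y - {x}\<close> leaves \<open>R g y\<close> unchanged.\<close>

lemma supp_essential:
  assumes x: "x \<in> supp y" and V: "openin K V" "x \<in> V"
  obtains f where "f \<in> Cp_set K" "\<And>z. z \<notin> V \<Longrightarrow> f z = 0" "R f y \<noteq> 0"
proof -
  define A where "A = supp y - {x}"
  have A: "finite A" "A \<subseteq> topspace K"
    unfolding A_def using finite_supp supp_subset by auto
  have "card A < supp_card y"
    unfolding A_def card_supp[symmetric] using finite_supp x by (rule card_Diff1_less)
  then have "\<not> supports y A"
    using supp_card_le[of y A] by linarith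
  then obtain g where g: "g \<in> Cp_set K" "\<And>z. z \<in> A \<Longrightarrow> g z = 0" "R g y \<noteq> 0"
    using A unfolding supports_def by auto
  have "closedin K A"
    using A K_t1 by (simp add: t1_space_closedin_finite)
  then have "openin K (V - A)"
    by (rule openin_diff[OF V(1)])
  moreover have "x \<in> V - A"
    using V(2) unfolding A_def by blast
  ultimately obtain h where h: "h \<in> Cp_set K" "h x = 1" "\<And>z. z \<notin> V - A \<Longrightarrow> h z = 0"
    using Cp_set_bump[OF K_normal K_t1, of x "V - A"] by blast
  define f where "f z = g z * h z" for z
  have f: "f \<in> Cp_set K"
    unfolding f_def by (rule Cp_set_mult[OF g(1) h(1)])
  have "R (\<lambda>z. g z - f z) y = 0"
  proof (rule R_eq_0_if_vanishes_on_supp)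
    show "(\<lambda>z. g z - f z) \<in> Cp_set K"
      by (rule Cp_set_diff[OF g(1) f])
    show "g z - f z = 0" if "z \<in> supp y" for z
    proof (cases "z = x")
      case True
      then show ?thesis
        using h(2) unfolding f_def by simp
    next
      case False
      then show ?thesis
        using that g(2) unfolding f_def A_def by simp
    qed
  qed
  then have "R f y \<noteq> 0"
    using R_diff[OF g(1) f] g(3) by simp
  moreover have "f z = 0" if "z \<notin> V" for z
    using h(3) that unfolding f_def by simp
  ultimately show ?thesis
    using that[OF f] by blast
qed

lemma supports_meet_nbhd:
  assumes y\<^sub>1: "y\<^sub>1 \<in> topspace L" and x: "x \<in> supp y\<^sub>1" and V: "openin K V" "x \<in> V"
  obtains W where "openin L W" "y\<^sub>1 \<in> W" "\<And>y A. y \<in> W \<Longrightarrow> supports y A \<Longrightarrow> A \<inter> V \<noteq> {}"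
proof -
  obtain f where f: "f \<in> Cp_set K" "\<And>z. z \<notin> V \<Longrightarrow> f z = 0" "R f y\<^sub>1 \<noteq> 0"
    using supp_essential[OF x V] by blast
  define W where "W = {y \<in> topspace L. R f y \<in> - {0}}"
  have "openin L W"
    unfolding W_def
    using Cp_set_continuous_map[OF R_in[OF f(1)]]
    by (rule openin_continuous_map_preimage) (simp add: open_Compl)
  moreover have "y\<^sub>1 \<in> W"
    unfolding W_def using y\<^sub>1 f(3) by simp
  moreover have "A \<inter> V \<noteq> {}" if "y \<in> W" "supports y A" for y A
  proof
    assume "A \<inter> V = {}"
    then have "R f y = 0"
      using that(2) f(1,2) unfolding supports_def by blast
    then show False
      using that(1) unfolding W_def by simp
  qed
  ultimately show ?thesis
    using that by blast
qed

lemma supp_meets_disjoint_nbhds: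
  assumes y\<^sub>1: "y\<^sub>1 \<in> topspace L"
  obtains W U where "openin L W" "y\<^sub>1 \<in> W"
    "\<And>x. x \<in> supp y\<^sub>1 \<Longrightarrow> openin K (U x)" "\<And>x. x \<in> supp y\<^sub>1 \<Longrightarrow> x \<in> U x"
    "disjoint_family_on U (supp y\<^sub>1)" "\<And>y x. y \<in> W \<Longrightarrow> x \<in> supp y\<^sub>1 \<Longrightarrow> supp y \<inter> U x \<noteq> {}"
proof -
  obtain U where U: "\<And>x. x \<in> supp y\<^sub>1 \<Longrightarrow> openin K (U x)" "\<And>x. x \<in> supp y\<^sub>1 \<Longrightarrow> x \<in> U x"
    "disjoint_family_on U (supp y\<^sub>1)"
    using Hausdorff_space_finite_separation[OF K_Hausdorff finite_supp supp_subset] by blast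
  have "\<forall>x\<in>supp y\<^sub>1. \<exists>W. openin L W \<and> y\<^sub>1 \<in> W \<and> (\<forall>y\<in>W. supp y \<inter> U x \<noteq> {})"
  proof
    fix x
    assume x: "x \<in> supp y\<^sub>1"
    obtain W where "openin L W" "y\<^sub>1 \<in> W" "\<And>y A. y \<in> W \<Longrightarrow> supports y A \<Longrightarrow> A \<inter> U x \<noteq> {}"
      using supports_meet_nbhd[OF y\<^sub>1 x U(1)[OF x] U(2)[OF x]] by blast
    then show "\<exists>W. openin L W \<and> y\<^sub>1 \<in> W \<and> (\<forall>y\<in>W. supp y \<inter> U x \<noteq> {})"
      using supports_supp by blast
  qed
  from bchoice[OF this] obtain W\<^sub>x
    where W\<^sub>x: "\<forall>x\<in>supp y\<^sub>1. openin L (W\<^sub>x x) \<and> y\<^sub>1 \<in> W\<^sub>x x \<and> (\<forall>y\<in>W\<^sub>x x. supp y \<inter> U x \<noteq> {})"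
    by blast
  define W where "W = topspace L \<inter> \<Inter> (W\<^sub>x ` supp y\<^sub>1)"
  have "openin L W"
    unfolding W_def using W\<^sub>x finite_supp by (intro openin_Int_Inter) auto
  moreover have "y\<^sub>1 \<in> W"
    unfolding W_def using y\<^sub>1 W\<^sub>x by blast
  moreover have "supp y \<inter> U x \<noteq> {}" if "y \<in> W" "x \<in> supp y\<^sub>1" for y x
    using that W\<^sub>x unfolding W_def by blast
  ultimately show ?thesis
    using that U by blast
qed

lemma continuous_map_unique_supp_point:
  assumes D: "D \<subseteq> topspace L" and U: "openin K U"
    and q: "\<And>y. y \<in> D \<Longrightarrow> supp y \<inter> U = {q y}"
  shows "continuous_map (subtopology L D) K q"
  unfolding continuous_map_eq_topcontinuous_at topcontinuous_at_def
proof (intro ballI conjI allI impI)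
  have topspace_D: "topspace (subtopology L D) = D"
    using D by auto
  fix y\<^sub>2
  assume y\<^sub>2: "y\<^sub>2 \<in> topspace (subtopology L D)"
  then show "y\<^sub>2 \<in> topspace (subtopology L D)" .
  show "q \<in> topspace (subtopology L D) \<rightarrow> topspace K"
    using q supp_subset topspace_D by blast
  fix V
  assume V: "openin K V \<and> q y\<^sub>2 \<in> V"
  have "y\<^sub>2 \<in> D"
    using y\<^sub>2 topspace_D by blast
  then have "q y\<^sub>2 \<in> supp y\<^sub>2" "openin K (V \<inter> U)" "q y\<^sub>2 \<in> V \<inter> U"
    using q V U by auto
  then obtain W where W: "openin L W" "y\<^sub>2 \<in> W"
    "\<And>y A. y \<in> W \<Longrightarrow> supports y A \<Longrightarrow> A \<inter> (V \<inter> U) \<noteq> {}"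
    using supports_meet_nbhd[of y\<^sub>2] D \<open>y\<^sub>2 \<in> D\<close> by blast
  show "\<exists>T. openin (subtopology L D) T \<and> y\<^sub>2 \<in> T \<and> (\<forall>y\<in>T. q y \<in> V)"
  proof (intro exI conjI ballI)
    show "openin (subtopology L D) (D \<inter> W)"
      using W(1) by (rule openin_subtopology_Int2)
    show "y\<^sub>2 \<in> D \<inter> W"
      using \<open>y\<^sub>2 \<in> D\<close> W(2) by blast
    fix y
    assume y: "y \<in> D \<inter> W"
    then obtain z where "z \<in> supp y" "z \<in> V" "z \<in> U"
      using W(3) supports_supp by blast
    moreover have "supp y \<inter> U = {q y}"
      using q y by blast
    ultimately show "q y \<in> V"
      by (metis IntI singletonD)
  qed
qed

definition supp_chart :: "'b \<Rightarrow> 'b set \<Rightarrow> ('b \<Rightarrow> 'a \<Rightarrow> 'a) \<Rightarrow> bool" where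
  "supp_chart y\<^sub>1 W p \<longleftrightarrow> openin L W \<and> y\<^sub>1 \<in> W \<and> (\<forall>y\<in>W. supp_card y\<^sub>1 \<le> supp_card y) \<and>
     (\<forall>y\<in>W. supp_card y = supp_card y\<^sub>1 \<longrightarrow> supp y = p y ` supp y\<^sub>1) \<and>
     (\<forall>x\<in>supp y\<^sub>1. continuous_map (subtopology L {y\<in>W. supp_card y = supp_card y\<^sub>1}) K (\<lambda>y. p y x))"

lemma supp_chart_exists:
  assumes y\<^sub>1: "y\<^sub>1 \<in> topspace L"
  obtains W p where "supp_chart y\<^sub>1 W p"
proof -
  obtain W U where W: "openin L W" "y\<^sub>1 \<in> W"
    and U: "\<And>x. x \<in> supp y\<^sub>1 \<Longrightarrow> openin K (U x)" "disjoint_family_on U (supp y\<^sub>1)"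
    and meets: "\<And>y x. y \<in> W \<Longrightarrow> x \<in> supp y\<^sub>1 \<Longrightarrow> supp y \<inter> U x \<noteq> {}"
    using supp_meets_disjoint_nbhds[OF y\<^sub>1] by metis
  define p where "p y x = (SOME z. z \<in> supp y \<inter> U x)" for y x
  have p: "p y x \<in> supp y \<inter> U x" if "y \<in> W" "x \<in> supp y\<^sub>1" for y x
    unfolding p_def using meets[OF that] some_in_eq by blast
  have card_le: "supp_card y\<^sub>1 \<le> supp_card y" if y: "y \<in> W" for y
  proof -
    have "inj_on (p y) (supp y\<^sub>1)"
      using U(2) p[OF y] by (blast intro: inj_on_if_disjoint_family_on)
    then have "card (supp y\<^sub>1) = card (p y ` supp y\<^sub>1)"
      by (simp add: card_image)
    also have "\<dots> \<le> card (supp y)"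
      using p[OF y] by (intro card_mono finite_supp) blast
    finally show ?thesis
      by (simp add: card_supp)
  qed
  define D where "D = {y\<in>W. supp_card y = supp_card y\<^sub>1}"
  have level: "supp y = p y ` supp y\<^sub>1" "\<And>x. x \<in> supp y\<^sub>1 \<Longrightarrow> supp y \<inter> U x = {p y x}"
    if "y \<in> D" for y
  proof -
    have "card (supp y) \<le> card (supp y\<^sub>1)" "y \<in> W"
      using that unfolding D_def by (simp_all add: card_supp)
    note image_eq_if_disjoint_family_on[OF finite_supp U(2) p[OF \<open>y \<in> W\<close>] this(1)]
    then show "supp y = p y ` supp y\<^sub>1" "\<And>x. x \<in> supp y\<^sub>1 \<Longrightarrow> supp y \<inter> U x = {p y x}"
      by auto
  qed
  have "D \<subseteq> topspace L"
    unfolding D_def using openin_subset[OF W(1)] by blast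
  then have "continuous_map (subtopology L D) K (\<lambda>y. p y x)" if "x \<in> supp y\<^sub>1" for x
    using continuous_map_unique_supp_point[OF _ U(1)[OF that] level(2)[OF _ that]] by blast
  then have "supp_chart y\<^sub>1 W p"
    unfolding supp_chart_def D_def using W card_le level(1) D_def by blast
  then show ?thesis
    by (rule that)
qed

lemma closedin_supp_card_le: "closedin L {y \<in> topspace L. supp_card y \<le> n}"
proof -
  have "openin L {y \<in> topspace L. n < supp_card y}"
  proof (subst openin_subopen, intro ballI)
    fix y\<^sub>1
    assume y\<^sub>1: "y\<^sub>1 \<in> {y \<in> topspace L. n < supp_card y}"
    then obtain W p where "supp_chart y\<^sub>1 W p"
      using supp_chart_exists by blast
    then have "openin L W" "y\<^sub>1 \<in> W" "W \<subseteq> {y \<in> topspace L. n < supp_card y}"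
      using y\<^sub>1 openin_subset unfolding supp_chart_def by fastforce+
    then show "\<exists>T. openin L T \<and> y\<^sub>1 \<in> T \<and> T \<subseteq> {y \<in> topspace L. n < supp_card y}"
      by blast
  qed
  then have "closedin L (topspace L - {y \<in> topspace L. n < supp_card y})"
    by (rule closedin_diff[OF closedin_topspace])
  moreover have "topspace L - {y \<in> topspace L. n < supp_card y} = {y \<in> topspace L. supp_card y \<le> n}"
    by auto
  ultimately show ?thesis
    by simp
qed

text \<open>Since \<open>g y = R (S g) y\<close> depends only on \<open>S g\<close> on \<open>supp y\<close>, the point \<open>y\<close> lies in a support
  of the functional \<open>g \<mapsto> S g x\<close> for some \<open>x \<in> supp y\<close>.\<close>

lemma S_supports_cover:
  assumes J: "\<And>x. S_supports x (J x)" and y: "y \<in> topspace L"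
  shows "\<exists>x\<in>supp y. y \<in> J x"
proof (rule ccontr)
  assume none: "\<not> (\<exists>x\<in>supp y. y \<in> J x)"
  define B where "B = \<Union> (J ` supp y)"
  have "finite B" "B \<subseteq> topspace L"
    unfolding B_def using finite_supp J unfolding S_supports_def by auto
  then have "closedin L B"
    using L_t1 by (simp add: t1_space_closedin_finite)
  then have "openin L (topspace L - B)"
    by (rule openin_diff[OF openin_topspace])
  moreover have "y \<in> topspace L - B"
    using y none unfolding B_def by blast
  ultimately obtain g where g: "g \<in> Cp_set L" "g y = 1" "\<And>w. w \<notin> topspace L - B \<Longrightarrow> g w = 0"
    using Cp_set_bump[OF L_normal L_t1, of y "topspace L - B"] by blast
  have "R (S g) y = 0"
  proof (rule R_eq_0_if_vanishes_on_supp)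
    show "S g \<in> Cp_set K"
      by (rule S_in[OF g(1)])
    show "S g x = 0" if "x \<in> supp y" for x
    proof -
      have "\<forall>w\<in>J x. g w = 0"
        using that g(3) unfolding B_def by blast
      then show ?thesis
        using J[of x] g(1) unfolding S_supports_def by blast
    qed
  qed
  then show False
    using R_S[OF g(1)] g(2) by simp
qed

lemma countable_if_countable_Union_supp:
  assumes C: "C \<subseteq> topspace L" and "countable (\<Union> (supp ` C))"
  shows "countable C"
proof -
  have "\<forall>x. \<exists>J. S_supports x J"
    using S_supports_exists by blast
  from choice[OF this] obtain J where J: "\<And>x. S_supports x (J x)"
    by blast
  then have finite_J: "finite (J x)" for x
    unfolding S_supports_def by blast
  have "C \<subseteq> \<Union> (J ` \<Union> (supp ` C))"
    using S_supports_cover[OF J] C by blast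
  moreover have "countable (\<Union> (J ` \<Union> (supp ` C)))"
    by (rule countable_UN[OF \<open>countable (\<Union> (supp ` C))\<close> countable_finite[OF finite_J]])
  ultimately show ?thesis
    by (rule countable_subset)
qed

lemma uncountable_level_set_chart:
  assumes "uncountable {y \<in> topspace L. supp_card y = n}"
  obtains y\<^sub>1 W p C where "supp_chart y\<^sub>1 W p" "closedin L C" "uncountable C"
    "C \<subseteq> {y \<in> W. supp_card y = supp_card y\<^sub>1}"
proof -
  define D where "D = {y \<in> topspace L. supp_card y = n}"
  have "\<forall>y\<in>topspace L. \<exists>W p. supp_chart y W p"
    using supp_chart_exists by blast
  from bchoice[OF this] obtain W where "\<forall>y\<in>topspace L. \<exists>p. supp_chart y (W y) p"
    by blast
  from bchoice[OF this] obtain p where chart: "\<forall>y\<in>topspace L. supp_chart y (W y) (p y)"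
    by blast
  have "second_countable L" "regular_space L"
    using L_metrizable L_compact
    by (simp_all add: compact_metrizable_imp_second_countable metrizable_imp_regular_space)
  moreover have "uncountable D"
    unfolding D_def by fact
  moreover have "openin L (W y)" "y \<in> W y" if "y \<in> D" for y
    using chart that unfolding D_def supp_chart_def by auto
  ultimately obtain y\<^sub>1 B where y\<^sub>1: "y\<^sub>1 \<in> D" and B: "L closure_of B \<subseteq> W y\<^sub>1" "uncountable (B \<inter> D)"
    by (rule second_countable_uncountable_localize)
  have chart\<^sub>1: "supp_chart y\<^sub>1 (W y\<^sub>1) (p y\<^sub>1)"
    using chart y\<^sub>1 unfolding D_def by blast
  define C where "C = L closure_of B \<inter> {y \<in> topspace L. supp_card y \<le> n}"
  have "closedin L C"
    unfolding C_def by (intro closedin_Int closedin_closure_of closedin_supp_card_le)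
  moreover have "C \<subseteq> {y \<in> W y\<^sub>1. supp_card y = supp_card y\<^sub>1}"
  proof
    fix y
    assume y: "y \<in> C"
    then have "y \<in> W y\<^sub>1"
      using B(1) unfolding C_def by blast
    then have "supp_card y\<^sub>1 \<le> supp_card y"
      using chart\<^sub>1 unfolding supp_chart_def by blast
    moreover have "supp_card y \<le> n" "supp_card y\<^sub>1 = n"
      using y y\<^sub>1 unfolding C_def D_def by auto
    ultimately show "y \<in> {y \<in> W y\<^sub>1. supp_card y = supp_card y\<^sub>1}"
      using \<open>y \<in> W y\<^sub>1\<close> by simp
  qed
  moreover have "uncountable C"
  proof -
    have "B \<inter> D \<subseteq> C"
    proof
      fix y
      assume y: "y \<in> B \<inter> D"
      then have "y \<in> L closure_of B"
        using closure_of_subset_Int[of L B] unfolding D_def by blast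
      then show "y \<in> C"
        using y unfolding C_def D_def by simp
    qed
    then show ?thesis
      using B(2) countable_subset by blast
  qed
  ultimately show ?thesis
    using that chart\<^sub>1 by blast
qed

lemma countable_chart_domain:
  assumes K: "countable_metrizable_closedin K" and chart: "supp_chart y\<^sub>1 W p"
    and C: "closedin L C" "C \<subseteq> {y \<in> W. supp_card y = supp_card y\<^sub>1}"
  shows "countable C"
proof -
  have "topspace (subtopology L C) = C"
    using closedin_subset[OF C(1)] by auto
  moreover have "compact_space (subtopology L C)"
    using closedin_compact_space[OF L_compact C(1)] by (rule compact_space_subtopology)
  moreover have "metrizable_space (subtopology L C)"
    using L_metrizable by (rule metrizable_space_subtopology)
  moreover have "continuous_map (subtopology L C) K (\<lambda>y. p y x)" if "x \<in> supp y\<^sub>1" for x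
  proof -
    have "continuous_map (subtopology L {y \<in> W. supp_card y = supp_card y\<^sub>1}) K (\<lambda>y. p y x)"
      using chart that unfolding supp_chart_def by blast
    then show ?thesis
      by (rule continuous_map_from_subtopology_mono[OF _ C(2)])
  qed
  ultimately have "countable ((\<lambda>y. p y x) ` C)" if "x \<in> supp y\<^sub>1" for x
    using countable_continuous_map_image[OF K_Hausdorff K] that by metis
  then have "countable (\<Union>x\<in>supp y\<^sub>1. (\<lambda>y. p y x) ` C)"
    by (rule countable_UN[OF countable_finite[OF finite_supp]])
  moreover have "\<Union> (supp ` C) = (\<Union>x\<in>supp y\<^sub>1. (\<lambda>y. p y x) ` C)"
  proof -
    have "supp y = p y ` supp y\<^sub>1" if "y \<in> C" for y
      using chart C(2) that unfolding supp_chart_def by blast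
    then show ?thesis
      by auto
  qed
  ultimately show ?thesis
    using countable_if_countable_Union_supp closedin_subset[OF C(1)] by simp
qed

lemma countable_topspace_L:
  assumes "countable_metrizable_closedin K"
  shows "countable (topspace L)"
proof (rule ccontr)
  assume "uncountable (topspace L)"
  then obtain n where "uncountable {y \<in> topspace L. supp_card y = n}"
    using uncountable_nat_level_set by blast
  then obtain y\<^sub>1 W p C where "supp_chart y\<^sub>1 W p" "closedin L C" "uncountable C"
    "C \<subseteq> {y \<in> W. supp_card y = supp_card y\<^sub>1}"
    by (rule uncountable_level_set_chart)
  then show False
    using countable_chart_domain[OF assms] by blast
qed

end

theorem theorem1p6:
  fixes K1 :: "'a topology" and K2 :: "'b topology" and L :: "'c topology"
  assumes "compact_space K1" "Hausdorff_space K1"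
      and "compact_space K2" "Hausdorff_space K2"
      and "\<not> (\<exists>S. closedin K1 S \<and> uncountable S \<and> metrizable_space (subtopology K1 S))"
      and "\<not> (\<exists>S. closedin K2 S \<and> uncountable S \<and> metrizable_space (subtopology K2 S))"
      and "metrizable_space L" "compact_space L" "uncountable (topspace L)"
  shows "\<not> contains_complemented_Cp (prod_topology K1 K2) L"
proof
  assume "contains_complemented_Cp (prod_topology K1 K2) L"
  then obtain R S where "Cp_factorization (prod_topology K1 K2) L R S"
    by (rule Cp_factorization_if_contains_complemented_Cp)
  then interpret Cp_factorization_compact "prod_topology K1 K2" L R S
    using assms(1-4,7,8)
    by unfold_locales (simp_all add: Cp_factorization_def compact_space_prod_topology
        Hausdorff_space_prod_topology)
  have "countable_metrizable_closedin K1" "countable_metrizable_closedin K2"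
    using assms(5,6) unfolding countable_metrizable_closedin_def by blast+
  then have "countable_metrizable_closedin (prod_topology K1 K2)"
    using assms(1-4) by (intro countable_metrizable_closedin_prod_topology)
  then show False
    using countable_topspace_L assms(9) by blast
qed

end
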